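(* Let $X\in\mathcal{D}^-$ and let $Z$ be a random variable. (a) If $X$ is in the sum-domain of attraction of $Z$, i.e. there exist $a_n>0$ and $b_n\in\mathbb{R}$ such that $a_n(X_1+\dots+X_n)-b_n\to Z$ in distribution, where $X_1,X_2,\dots$ are i.i.d. copies of $X$, then $Z\in\mathcal{D}^-$. (b) If $X$ is in the max-domain of attraction of $Z$, i.e. there exist $a_n>0$ and $b_n\in\mathbb{R}$ such that $a_n\max\{X_1,\dots,X_n\}-b_n\to Z$ in distribution, where $X_1,X_2,\dots$ are i.i.d. copies of $X$, then $Z\in\mathcal{D}^-$.
   Context: For real random variables, $X \le_{st} Y$ means $P(X\le t)\ge P(Y\le t)$ for all $t\in\mathbb{R}$. A real random variable $X$ (equivalently its distribution function $F_X$) belongs to $\mathcal{D}^-$ if for every $n\in\mathbb{N}$, all $\theta_1,\dots,\theta_n\ge 0$ with $\sum_{i=1}^n\theta_i=1$, and i.i.d. random variables $X_1,\dots,X_n$ with distribution $F_X$, we have $X_1\le_{st}\sum_{i=1}^n\theta_iX_i$. *)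

theory Defs
  imports "HOL-Probability.Probability"
begin

text \<open>Laws of real random variables are represented by real probability measures on borel.
  For laws M and N, st_le M N means X \<le>st Y for X with law M and Y with law N.\<close>

definition st_le :: "real measure \<Rightarrow> real measure \<Rightarrow> bool" where
  "st_le M N \<longleftrightarrow> (\<forall>t::real. cdf N t \<le> cdf M t)"

definition in_Dminus :: "real measure \<Rightarrow> bool" where
  "in_Dminus M \<longleftrightarrow>
     (\<forall>(n::nat) (\<theta>::nat \<Rightarrow> real).
        (\<forall>i\<in>{1..n}. 0 \<le> \<theta> i) \<and> (\<Sum>i=1..n. \<theta> i) = 1 \<longrightarrow>
        st_le M (distr (PiM {1..n} (\<lambda>_. M)) borel (\<lambda>x. \<Sum>i=1..n. \<theta> i * x i)))"

end

theory Submission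
  imports Defs
begin

text \<open>The class D^- is closed under the two operations that produce Z.

  First, if g is coordinatewise nondecreasing and convex and X_1, ..., X_n are i.i.d. with law in
  D^-, then the law of g(X_1, ..., X_n) is in D^-. Realise k independent copies of it as g applied
  to the rows of an i.i.d. array (X_ij). By convexity, \<Sum>_i \<theta>_i g(row_i) dominates g applied to the
  column averages \<Sum>_i \<theta>_i X_ij; these are i.i.d. and stochastically larger than X_1, so a quantile
  coupling and the monotonicity of g conclude. Normalised sums and normalised maxima are
  statistics of this kind.

  Second, D^- is closed under weak limits: weighted sums of i.i.d. copies converge weakly by
  Levy's continuity theorem, and the stochastic order passes to the limit at the common
  continuity points of the cdfs, which are dense since atoms are countable.\<close>

lemma st_le_trans [trans]: "st_le L M \<Longrightarrow> st_le M N \<Longrightarrow> st_le L N"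
  unfolding st_le_def by (meson order.trans)

lemma measurable_PiM_borel_cong:
  assumes "sets \<mu> = sets borel"
  shows "f \<in> borel_measurable (PiM I (\<lambda>_. \<mu>)) \<longleftrightarrow> f \<in> borel_measurable (PiM I (\<lambda>_. borel))"
  by (simp only: measurable_cong_sets[OF sets_PiM_cong[OF refl assms] refl])

lemma real_distribution_distr_PiM:
  assumes "real_distribution \<mu>" "f \<in> borel_measurable (PiM I (\<lambda>_. borel))"
  shows "real_distribution (distr (PiM I (\<lambda>_. \<mu>)) borel f)"
proof -
  interpret real_distribution \<mu> by fact
  interpret P: prob_space "PiM I (\<lambda>_. \<mu>)" by (intro prob_space_PiM prob_space_axioms)
  show ?thesis
    using assms(2) measurable_PiM_borel_cong[OF events_eq_borel] by (intro P.real_distribution_distr) simp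
qed

lemma st_le_distr_mono:
  assumes "prob_space \<Omega>" "f \<in> borel_measurable \<Omega>" "g \<in> borel_measurable \<Omega>"
    and "\<And>\<omega>. \<omega> \<in> space \<Omega> \<Longrightarrow> f \<omega> \<le> g \<omega>"
  shows "st_le (distr \<Omega> borel f) (distr \<Omega> borel g)"
  unfolding st_le_def
proof
  fix t
  interpret prob_space \<Omega> by fact
  have cdf: "cdf (distr \<Omega> borel h) t = prob {\<omega>\<in>space \<Omega>. h \<omega> \<le> t}" if "h \<in> borel_measurable \<Omega>" for h
    using that unfolding cdf_def by (subst measure_distr) (auto intro!: arg_cong[where f=prob])
  have "prob {\<omega>\<in>space \<Omega>. g \<omega> \<le> t} \<le> prob {\<omega>\<in>space \<Omega>. f \<omega> \<le> t}"
    using assms by (intro finite_measure_mono) (auto intro: order.trans)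
  then show "cdf (distr \<Omega> borel g) t \<le> cdf (distr \<Omega> borel f) t"
    using assms(2,3) by (simp add: cdf)
qed

lemma PiM_distr_borel:
  fixes f :: "'a \<Rightarrow> real"
  assumes "finite J" "prob_space N" "f \<in> borel_measurable N"
  shows "PiM J (\<lambda>_. distr N borel f) = distr (PiM J (\<lambda>_. N)) (PiM J (\<lambda>_. borel)) (compose J f)"
proof -
  let ?\<nu> = "distr N borel f"
  interpret prob_space N by fact
  have \<nu>: "prob_space ?\<nu>" using assms(3) by (rule prob_space_distr)
  have f: "f \<in> measurable N ?\<nu>" using assms(3) by simp
  have "PiM J (\<lambda>_. ?\<nu>) = PiM J (\<lambda>_. distr N ?\<nu> f)"
    by (intro PiM_cong distr_cong[symmetric]) auto
  also have "\<dots> = distr (PiM J (\<lambda>_. N)) (PiM J (\<lambda>_. ?\<nu>)) (compose J f)"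
    using assms \<nu> f by (intro distr_PiM_finite_prob_space'[symmetric]) auto
  also have "\<dots> = distr (PiM J (\<lambda>_. N)) (PiM J (\<lambda>_. borel)) (compose J f)"
    by (intro distr_cong sets_PiM_cong) auto
  finally show ?thesis .
qed

lemma st_le_quantile_le:
  assumes "real_distribution \<mu>" "real_distribution \<nu>" "st_le \<mu> \<nu>" "0 < \<omega>" "\<omega> < 1"
  shows "Inf {x. \<omega> \<le> cdf \<mu> x} \<le> Inf {x. \<omega> \<le> cdf \<nu> x}"
proof -
  interpret A: cdf_distribution \<mu> unfolding cdf_distribution_def by fact
  interpret B: cdf_distribution \<nu> unfolding cdf_distribution_def by fact
  have "\<omega> \<le> cdf \<nu> (B.I \<omega>)" using B.pseudoinverse[of \<omega> "B.I \<omega>"] assms by simp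
  also have "\<dots> \<le> cdf \<mu> (B.I \<omega>)" using assms(3) unfolding st_le_def ..
  finally show ?thesis using A.pseudoinverse[of \<omega> "B.I \<omega>"] assms by simp
qed

lemma st_le_distr_PiM_mono:
  fixes g :: "('i \<Rightarrow> real) \<Rightarrow> real"
  assumes \<mu>: "real_distribution \<mu>" and \<nu>: "real_distribution \<nu>" and "st_le \<mu> \<nu>" and J: "finite J"
    and g[measurable]: "g \<in> borel_measurable (PiM J (\<lambda>_. borel))"
    and mono: "\<And>x y. (\<And>j. j \<in> J \<Longrightarrow> x j \<le> y j) \<Longrightarrow> g x \<le> g y"
  shows "st_le (distr (PiM J (\<lambda>_. \<mu>)) borel g) (distr (PiM J (\<lambda>_. \<nu>)) borel g)"
proof -
  let ?U = "restrict_space lborel {0<..<1::real}"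
  have U: "prob_space ?U"
    by (auto simp add: emeasure_restrict_space space_restrict_space intro!: prob_spaceI)
  have quantile_measurable: "(\<lambda>\<omega>. Inf {x. \<omega> \<le> cdf \<rho> x}) \<in> borel_measurable ?U"
    if "real_distribution \<rho>" for \<rho>
  proof -
    interpret cdf_distribution \<rho> unfolding cdf_distribution_def by fact
    show ?thesis
      using measurable_CI by (simp only: measurable_cong_sets[OF sets_restrict_space_cong[OF sets_lborel] refl])
  qed
  have quantile_law: "distr (PiM J (\<lambda>_. \<rho>)) borel g =
      distr (PiM J (\<lambda>_. ?U)) borel (\<lambda>u. g (\<lambda>j\<in>J. Inf {x. u j \<le> cdf \<rho> x}))"
    if "real_distribution \<rho>" for \<rho>
  proof -
    interpret cdf_distribution \<rho> unfolding cdf_distribution_def by fact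
    note Q[measurable] = quantile_measurable[OF that]
    have "distr (PiM J (\<lambda>_. \<rho>)) borel g = distr (PiM J (\<lambda>_. distr ?U borel I)) borel g"
      by (simp only: distr_I_eq_M)
    also have "\<dots> = distr (distr (PiM J (\<lambda>_. ?U)) (PiM J (\<lambda>_. borel)) (compose J I)) borel g"
      by (simp only: PiM_distr_borel[OF J U Q])
    also have "\<dots> = distr (PiM J (\<lambda>_. ?U)) borel (g \<circ> compose J I)"
      by (rule distr_distr) (unfold compose_def, measurable)
    finally show ?thesis by (simp add: compose_def comp_def)
  qed
  show ?thesis
    unfolding quantile_law[OF \<mu>] quantile_law[OF \<nu>]
  proof (rule st_le_distr_mono)
    show "prob_space (PiM J (\<lambda>_. ?U))" using U by (rule prob_space_PiM)
  next
    fix u assume u: "u \<in> space (PiM J (\<lambda>_. ?U))"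
    show "g (\<lambda>j\<in>J. Inf {x. u j \<le> cdf \<mu> x}) \<le> g (\<lambda>j\<in>J. Inf {x. u j \<le> cdf \<nu> x})"
      using u by (intro mono) (auto simp: space_PiM space_restrict_space intro!: st_le_quantile_le[OF \<mu> \<nu> assms(3)])
  qed (use quantile_measurable[OF \<mu>] quantile_measurable[OF \<nu>] in measurable)
qed

lemma indep_vars_PiM_components:
  assumes M: "prob_space M" and I: "I \<noteq> {}"
  shows "prob_space.indep_vars (PiM I (\<lambda>_. M)) (\<lambda>_. M) (\<lambda>i x. x i) I"
proof -
  interpret P: prob_space "PiM I (\<lambda>_. M)" by (intro prob_space_PiM M)
  have "distr (PiM I (\<lambda>_. M)) (PiM I (\<lambda>_. M)) (\<lambda>x. \<lambda>i\<in>I. x i) = distr (PiM I (\<lambda>_. M)) (PiM I (\<lambda>_. M)) (\<lambda>x. x)"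
    by (rule distr_cong) (auto simp: space_PiM PiE_def extensional_restrict)
  also have "\<dots> = PiM I (\<lambda>i. distr (PiM I (\<lambda>_. M)) M (\<lambda>x. x i))"
    by (simp, rule PiM_cong[OF refl], rule distr_PiM_component[symmetric]) (auto simp: M)
  finally show ?thesis
    by (subst P.indep_vars_iff_distr_eq_PiM'[OF I]) auto
qed

lemma distr_PiM_curry:
  assumes M: "prob_space M" and I: "I \<noteq> {}" and J: "J \<noteq> {}"
  shows "distr (PiM (I \<times> J) (\<lambda>_. M)) (PiM I (\<lambda>_. PiM J (\<lambda>_. M))) (\<lambda>\<omega>. \<lambda>i\<in>I. \<lambda>j\<in>J. \<omega> (i, j))
         = PiM I (\<lambda>_. PiM J (\<lambda>_. M))"
proof -
  let ?\<Omega> = "PiM (I \<times> J) (\<lambda>_. M)"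
  interpret P: prob_space ?\<Omega> by (intro prob_space_PiM M)
  have rows_measurable: "(\<lambda>\<omega>. \<lambda>j\<in>J. \<omega> (i, j)) \<in> measurable ?\<Omega> (PiM J (\<lambda>_. M))" if "i \<in> I" for i
    using that by (auto intro!: measurable_restrict measurable_component_singleton)
  have "P.indep_vars (\<lambda>i. PiM ({i} \<times> J) (\<lambda>_. M)) (\<lambda>i \<omega>. restrict \<omega> ({i} \<times> J)) I"
    using indep_vars_PiM_components[OF M, of "I \<times> J"] I J
    by (intro P.indep_vars_restrict) (auto simp: disjoint_family_on_def)
  moreover have "(\<lambda>y. \<lambda>j\<in>J. y (i, j)) \<in> measurable (PiM ({i} \<times> J) (\<lambda>_. M)) (PiM J (\<lambda>_. M))" for i
    by (auto intro!: measurable_restrict measurable_component_singleton)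
  ultimately have "P.indep_vars (\<lambda>_. PiM J (\<lambda>_. M)) (\<lambda>i \<omega>. \<lambda>j\<in>J. restrict \<omega> ({i} \<times> J) (i, j)) I"
    by (rule P.indep_vars_compose2)
  then have "P.indep_vars (\<lambda>_. PiM J (\<lambda>_. M)) (\<lambda>i \<omega>. \<lambda>j\<in>J. \<omega> (i, j)) I"
    by (rule P.indep_vars_cong[THEN iffD1, rotated 3]) (auto simp: fun_eq_iff)
  moreover have "distr ?\<Omega> (PiM J (\<lambda>_. M)) (\<lambda>\<omega>. \<lambda>j\<in>J. \<omega> (i, j)) = PiM J (\<lambda>_. M)" if "i \<in> I" for i
    using distr_PiM_reindex[of "I \<times> J" "\<lambda>_. M" "\<lambda>j. (i, j)" J] M that by (auto simp: inj_on_def)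
  ultimately show ?thesis
    using P.indep_vars_iff_distr_eq_PiM'[OF I rows_measurable] by (simp cong: PiM_cong)
qed

lemma PiM_distr_rows:
  fixes f :: "('j \<Rightarrow> 'a) \<Rightarrow> real"
  assumes M: "prob_space M" and I: "finite I" "I \<noteq> {}" and J: "J \<noteq> {}"
    and f[measurable]: "f \<in> borel_measurable (PiM J (\<lambda>_. M))"
  shows "PiM I (\<lambda>_. distr (PiM J (\<lambda>_. M)) borel f) =
    distr (PiM (I \<times> J) (\<lambda>_. M)) (PiM I (\<lambda>_. borel)) (\<lambda>\<omega>. \<lambda>i\<in>I. f (\<lambda>j\<in>J. \<omega> (i, j)))"
proof -
  let ?curry = "\<lambda>\<omega>. \<lambda>i\<in>I. \<lambda>j\<in>J. \<omega> (i, j)"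
  have curry: "?curry \<in> measurable (PiM (I \<times> J) (\<lambda>_. M)) (PiM I (\<lambda>_. PiM J (\<lambda>_. M)))"
    by (auto intro!: measurable_restrict measurable_component_singleton)
  have "PiM I (\<lambda>_. distr (PiM J (\<lambda>_. M)) borel f) =
      distr (PiM I (\<lambda>_. PiM J (\<lambda>_. M))) (PiM I (\<lambda>_. borel)) (compose I f)"
    using I M by (intro PiM_distr_borel prob_space_PiM f)
  also have "\<dots> = distr (PiM (I \<times> J) (\<lambda>_. M)) (PiM I (\<lambda>_. borel)) (compose I f \<circ> ?curry)"
    by (subst distr_PiM_curry[OF M I(2) J, symmetric], rule distr_distr[OF _ curry])
       (unfold compose_def, measurable)
  finally show ?thesis by (simp add: compose_def comp_def cong: restrict_cong)
qed

lemma PiM_distr_columns: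
  fixes f :: "('i \<Rightarrow> 'a) \<Rightarrow> real"
  assumes M: "prob_space M" and I: "I \<noteq> {}" and J: "finite J" "J \<noteq> {}"
    and f[measurable]: "f \<in> borel_measurable (PiM I (\<lambda>_. M))"
  shows "PiM J (\<lambda>_. distr (PiM I (\<lambda>_. M)) borel f) =
    distr (PiM (I \<times> J) (\<lambda>_. M)) (PiM J (\<lambda>_. borel)) (\<lambda>\<omega>. \<lambda>j\<in>J. f (\<lambda>i\<in>I. \<omega> (i, j)))"
proof -
  let ?swap = "\<lambda>\<omega>. \<lambda>p\<in>J \<times> I. \<omega> (prod.swap p)"
  have swap: "?swap \<in> measurable (PiM (I \<times> J) (\<lambda>_. M)) (PiM (J \<times> I) (\<lambda>_. M))"
    by (auto intro!: measurable_restrict measurable_component_singleton)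
  have reindex: "distr (PiM (I \<times> J) (\<lambda>_. M)) (PiM (J \<times> I) (\<lambda>_. M)) ?swap = PiM (J \<times> I) (\<lambda>_. M)"
    using distr_PiM_reindex[of "I \<times> J" "\<lambda>_. M" prod.swap "J \<times> I"] M by fastforce
  have "PiM J (\<lambda>_. distr (PiM I (\<lambda>_. M)) borel f) =
      distr (PiM (J \<times> I) (\<lambda>_. M)) (PiM J (\<lambda>_. borel)) (\<lambda>\<omega>. \<lambda>j\<in>J. f (\<lambda>i\<in>I. \<omega> (j, i)))"
    by (rule PiM_distr_rows[OF M J I f])
  also have "\<dots> = distr (PiM (I \<times> J) (\<lambda>_. M)) (PiM J (\<lambda>_. borel))
      ((\<lambda>\<omega>. \<lambda>j\<in>J. f (\<lambda>i\<in>I. \<omega> (j, i))) \<circ> ?swap)"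
    by (subst (1) reindex[symmetric], rule distr_distr[OF _ swap]) measurable
  finally show ?thesis by (simp add: comp_def cong: restrict_cong)
qed

lemma char_distr_scale:
  assumes "real_distribution \<mu>"
  shows "char (distr \<mu> borel (\<lambda>y. c * y)) t = char \<mu> (c * t)"
proof -
  interpret real_distribution \<mu> by fact
  show ?thesis unfolding char_def by (subst integral_distr) (auto simp: ac_simps)
qed

lemma char_distr_PiM_weighted_sum:
  assumes \<mu>: "real_distribution \<mu>" and I: "finite I" "I \<noteq> {}"
  shows "char (distr (PiM I (\<lambda>_. \<mu>)) borel (\<lambda>x. \<Sum>i\<in>I. \<theta> i * x i)) t = (\<Prod>i\<in>I. char \<mu> (\<theta> i * t))"
proof -
  interpret real_distribution \<mu> by fact
  interpret P: prob_space "PiM I (\<lambda>_. \<mu>)" by (intro prob_space_PiM prob_space_axioms)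
  have \<mu>_borel: "measurable \<mu> N = measurable borel N" for N :: "real measure"
    by (rule measurable_cong_sets[OF events_eq_borel refl])
  have "P.indep_vars (\<lambda>_. \<mu>) (\<lambda>i x. x i) I"
    by (rule indep_vars_PiM_components[OF prob_space_axioms I(2)])
  then have indep: "P.indep_vars (\<lambda>_. borel) (\<lambda>i x. \<theta> i * x i) I"
    by (rule P.indep_vars_compose2[where Y="\<lambda>i y. \<theta> i * y"]) (simp add: \<mu>_borel)
  have "distr (PiM I (\<lambda>_. \<mu>)) borel (\<lambda>x. \<theta> i * x i) = distr \<mu> borel (\<lambda>y. \<theta> i * y)" if "i \<in> I" for i
  proof -
    have "distr (PiM I (\<lambda>_. \<mu>)) borel (\<lambda>x. \<theta> i * x i) =
        distr (distr (PiM I (\<lambda>_. \<mu>)) \<mu> (\<lambda>x. x i)) borel (\<lambda>y. \<theta> i * y)"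
      using that by (subst distr_distr) (auto simp: comp_def \<mu>_borel)
    also have "\<dots> = distr \<mu> borel (\<lambda>y. \<theta> i * y)"
      using that by (subst distr_PiM_component) (auto simp: prob_space_axioms)
    finally show ?thesis .
  qed
  then show ?thesis
    using P.char_distr_sum[OF indep, of t] char_distr_scale[OF \<mu>] by (simp cong: prod.cong)
qed

lemma weak_conv_m_distr_PiM_weighted_sum:
  assumes \<mu>: "\<And>n. real_distribution (\<mu> n)" and \<mu>': "real_distribution \<mu>'" and "weak_conv_m \<mu> \<mu>'"
    and I: "finite I" "I \<noteq> {}"
  shows "weak_conv_m (\<lambda>n. distr (PiM I (\<lambda>_. \<mu> n)) borel (\<lambda>x. \<Sum>i\<in>I. \<theta> i * x i))
                     (distr (PiM I (\<lambda>_. \<mu>')) borel (\<lambda>x. \<Sum>i\<in>I. \<theta> i * x i))"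
proof (rule levy_continuity)
  show "(\<lambda>n. char (distr (PiM I (\<lambda>_. \<mu> n)) borel (\<lambda>x. \<Sum>i\<in>I. \<theta> i * x i)) t) \<longlonglongrightarrow>
        char (distr (PiM I (\<lambda>_. \<mu>')) borel (\<lambda>x. \<Sum>i\<in>I. \<theta> i * x i)) t" for t
    unfolding char_distr_PiM_weighted_sum[OF \<mu> I] char_distr_PiM_weighted_sum[OF \<mu>' I]
    by (intro tendsto_prod levy_continuity1[OF \<mu> \<mu>' assms(3)])
qed (use \<mu> \<mu>' I in \<open>auto intro!: real_distribution_distr_PiM\<close>)

lemma st_le_weak_conv:
  assumes \<mu>': "real_distribution \<mu>'" and \<nu>': "real_distribution \<nu>'"
    and "weak_conv_m \<mu> \<mu>'" "weak_conv_m \<nu> \<nu>'"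
    and le: "eventually (\<lambda>n. st_le (\<mu> n) (\<nu> n)) sequentially"
  shows "st_le \<mu>' \<nu>'"
  unfolding st_le_def
proof (rule allI, rule ccontr)
  interpret A: real_distribution \<mu>' by fact
  interpret B: real_distribution \<nu>' by fact
  fix t assume "\<not> cdf \<nu>' t \<le> cdf \<mu>' t"
  then have lt: "cdf \<mu>' t < cdf \<nu>' t" by simp
  have at_continuity_point: "cdf \<nu>' x \<le> cdf \<mu>' x" if "measure \<mu>' {x} = 0" "measure \<nu>' {x} = 0" for x
  proof (rule LIMSEQ_le)
    show "(\<lambda>n. cdf (\<mu> n) x) \<longlonglongrightarrow> cdf \<mu>' x"
      using assms(3) that A.isCont_cdf by (auto simp: weak_conv_m_def weak_conv_def)
    show "(\<lambda>n. cdf (\<nu> n) x) \<longlonglongrightarrow> cdf \<nu>' x"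
      using assms(4) that B.isCont_cdf by (auto simp: weak_conv_m_def weak_conv_def)
    show "\<exists>N. \<forall>n\<ge>N. cdf (\<nu> n) x \<le> cdf (\<mu> n) x"
      using le unfolding st_le_def eventually_sequentially by blast
  qed
  have "((cdf \<mu>') \<longlongrightarrow> cdf \<mu>' t) (at_right t)"
    using A.cdf_is_right_cont by (simp add: continuous_within)
  from order_tendstoD(2)[OF this lt]
  obtain b where b: "b > t" "\<And>y. y > t \<Longrightarrow> y < b \<Longrightarrow> cdf \<mu>' y < cdf \<nu>' t"
    unfolding eventually_at_right_field by blast
  have "countable ({x. measure \<mu>' {x} \<noteq> 0} \<union> {x. measure \<nu>' {x} \<noteq> 0})"
    using A.countable_support B.countable_support by simp
  from open_minus_countable[OF this, of "{t<..<b}"] b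
  obtain x where x: "t < x" "x < b" "measure \<mu>' {x} = 0" "measure \<nu>' {x} = 0"
    by auto
  have "cdf \<nu>' t \<le> cdf \<nu>' x" using x by (intro B.cdf_nondecreasing) auto
  also have "\<dots> \<le> cdf \<mu>' x" using x by (intro at_continuity_point)
  also have "\<dots> < cdf \<nu>' t" using x b by auto
  finally show False by simp
qed

lemma in_Dminus_distr_PiM:
  fixes g :: "('j \<Rightarrow> real) \<Rightarrow> real"
  assumes M: "real_distribution M" and D: "in_Dminus M" and J: "finite J" "J \<noteq> {}"
    and g[measurable]: "g \<in> borel_measurable (PiM J (\<lambda>_. borel))"
    and mono: "\<And>x y. (\<And>j. j \<in> J \<Longrightarrow> x j \<le> y j) \<Longrightarrow> g x \<le> g y"
    and convex: "\<And>k \<theta> (y::nat \<Rightarrow> 'j \<Rightarrow> real). (\<forall>i\<in>{1..k}. 0 \<le> \<theta> i) \<Longrightarrow> (\<Sum>i=1..k. \<theta> i) = 1 \<Longrightarrow>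
          g (\<lambda>j\<in>J. \<Sum>i=1..k. \<theta> i * y i j) \<le> (\<Sum>i=1..k. \<theta> i * g (\<lambda>j\<in>J. y i j))"
  shows "in_Dminus (distr (PiM J (\<lambda>_. M)) borel g)"
  unfolding in_Dminus_def
proof (intro allI impI)
  fix k and \<theta> :: "nat \<Rightarrow> real"
  assume \<theta>: "(\<forall>i\<in>{1..k}. 0 \<le> \<theta> i) \<and> (\<Sum>i=1..k. \<theta> i) = 1"
  define I where "I = {1..k}"
  have "k \<ge> 1" using \<theta> by (cases k) auto
  then have I: "finite I" "I \<noteq> {}" by (auto simp: I_def)
  interpret real_distribution M by fact
  let ?Y = "distr (PiM J (\<lambda>_. M)) borel g"
  let ?V = "distr (PiM I (\<lambda>_. M)) borel (\<lambda>x. \<Sum>i\<in>I. \<theta> i * x i)"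
  let ?\<Omega> = "PiM (I \<times> J) (\<lambda>_. M)"
  have \<Omega>_borel: "measurable ?\<Omega> N = measurable (PiM (I \<times> J) (\<lambda>_. borel)) N" for N :: "'b measure"
    by (rule measurable_cong_sets[OF sets_PiM_cong[OF refl events_eq_borel] refl])
  have g_M: "g \<in> borel_measurable (PiM J (\<lambda>_. M))"
    using g measurable_PiM_borel_cong[OF events_eq_borel] by simp
  have ws_M: "(\<lambda>x. \<Sum>i\<in>I. \<theta> i * x i) \<in> borel_measurable (PiM I (\<lambda>_. M))"
    unfolding measurable_PiM_borel_cong[OF events_eq_borel] by measurable
  have "st_le ?Y (distr (PiM J (\<lambda>_. ?V)) borel g)"
  proof (rule st_le_distr_PiM_mono[OF M _ _ J(1) g mono])
    show "real_distribution ?V" by (rule real_distribution_distr_PiM[OF M]) measurable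
    show "st_le M ?V" using D \<theta> unfolding in_Dminus_def I_def by blast
  qed
  also have "distr (PiM J (\<lambda>_. ?V)) borel g = distr ?\<Omega> borel (\<lambda>\<omega>. g (\<lambda>j\<in>J. \<Sum>i\<in>I. \<theta> i * \<omega> (i, j)))"
    unfolding PiM_distr_columns[OF prob_space_axioms I(2) J ws_M]
    by (subst distr_distr) (auto simp: comp_def \<Omega>_borel)
  also have "st_le \<dots> (distr ?\<Omega> borel (\<lambda>\<omega>. \<Sum>i\<in>I. \<theta> i * g (\<lambda>j\<in>J. \<omega> (i, j))))"
  proof (rule st_le_distr_mono)
    show "prob_space ?\<Omega>" by (intro prob_space_PiM prob_space_axioms)
    show "g (\<lambda>j\<in>J. \<Sum>i\<in>I. \<theta> i * \<omega> (i, j)) \<le> (\<Sum>i\<in>I. \<theta> i * g (\<lambda>j\<in>J. \<omega> (i, j)))" for \<omega>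
      using convex[of k \<theta> "\<lambda>i j. \<omega> (i, j)"] \<theta> unfolding I_def by simp
  qed (use I in \<open>unfold \<Omega>_borel, measurable\<close>)+
  also have "\<dots> = distr (PiM I (\<lambda>_. ?Y)) borel (\<lambda>x. \<Sum>i\<in>I. \<theta> i * x i)"
    unfolding PiM_distr_rows[OF prob_space_axioms I J(2) g_M]
    by (subst distr_distr) (auto simp: comp_def \<Omega>_borel)
  finally show "st_le ?Y (distr (PiM {1..k} (\<lambda>_. ?Y)) borel (\<lambda>x. \<Sum>i=1..k. \<theta> i * x i))"
    unfolding I_def .
qed

lemma in_Dminus_weak_conv:
  assumes \<mu>: "\<And>n. real_distribution (\<mu> n)" and Z: "real_distribution Z"
    and D: "eventually (\<lambda>n. in_Dminus (\<mu> n)) sequentially" and w: "weak_conv_m \<mu> Z"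
  shows "in_Dminus Z"
  unfolding in_Dminus_def
proof (intro allI impI)
  fix k and \<theta> :: "nat \<Rightarrow> real"
  assume \<theta>: "(\<forall>i\<in>{1..k}. 0 \<le> \<theta> i) \<and> (\<Sum>i=1..k. \<theta> i) = 1"
  then have "k \<ge> 1" by (cases k) auto
  then have I: "finite {1..k}" "{1..k} \<noteq> {}" by auto
  show "st_le Z (distr (PiM {1..k} (\<lambda>_. Z)) borel (\<lambda>x. \<Sum>i=1..k. \<theta> i * x i))"
  proof (rule st_le_weak_conv[OF Z _ w weak_conv_m_distr_PiM_weighted_sum[OF \<mu> Z w I]])
    show "real_distribution (distr (PiM {1..k} (\<lambda>_. Z)) borel (\<lambda>x. \<Sum>i=1..k. \<theta> i * x i))"
      by (rule real_distribution_distr_PiM[OF Z]) measurable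
    show "eventually (\<lambda>n. st_le (\<mu> n) (distr (PiM {1..k} (\<lambda>_. \<mu> n)) borel (\<lambda>x. \<Sum>i=1..k. \<theta> i * x i)))
        sequentially"
      using D by (rule eventually_mono) (use \<theta> in \<open>auto simp: in_Dminus_def\<close>)
  qed
qed

lemma in_Dminus_sum_domain_of_attraction:
  fixes a b :: "nat \<Rightarrow> real"
  assumes M: "real_distribution M" and Z: "real_distribution Z" and D: "in_Dminus M"
    and a: "\<And>n. 0 < a n"
    and w: "weak_conv_m (\<lambda>n. distr (PiM {1..n} (\<lambda>_. M)) borel (\<lambda>x. a n * (\<Sum>i=1..n. x i) - b n)) Z"
  shows "in_Dminus Z"
proof (rule in_Dminus_weak_conv[OF _ Z _ w])
  show "real_distribution (distr (PiM {1..n} (\<lambda>_. M)) borel (\<lambda>x. a n * (\<Sum>i=1..n. x i) - b n))" for n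
    by (rule real_distribution_distr_PiM[OF M]) measurable
  show "eventually (\<lambda>n. in_Dminus (distr (PiM {1..n} (\<lambda>_. M)) borel (\<lambda>x. a n * (\<Sum>i=1..n. x i) - b n)))
      sequentially"
    unfolding eventually_sequentially
  proof (intro exI allI impI)
    fix n :: nat assume "n \<ge> 1"
    show "in_Dminus (distr (PiM {1..n} (\<lambda>_. M)) borel (\<lambda>x. a n * (\<Sum>i=1..n. x i) - b n))"
    proof (rule in_Dminus_distr_PiM[OF M D])
      fix x y :: "nat \<Rightarrow> real" assume "\<And>j. j \<in> {1..n} \<Longrightarrow> x j \<le> y j"
      then have "(\<Sum>i=1..n. x i) \<le> (\<Sum>i=1..n. y i)" by (intro sum_mono) auto
      then show "a n * (\<Sum>i=1..n. x i) - b n \<le> a n * (\<Sum>i=1..n. y i) - b n"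
        using a[of n] by simp
    next
      fix k and \<theta> :: "nat \<Rightarrow> real" and y :: "nat \<Rightarrow> nat \<Rightarrow> real"
      assume "(\<Sum>i=1..k. \<theta> i) = 1"
      then have "(\<Sum>i=1..k. \<theta> i * (a n * (\<Sum>j=1..n. y i j) - b n)) =
          a n * (\<Sum>i=1..k. \<Sum>j=1..n. \<theta> i * y i j) - b n"
        by (simp add: algebra_simps sum_subtractf sum_distrib_left flip: sum_distrib_right)
      also have "\<dots> = a n * (\<Sum>j=1..n. \<Sum>i=1..k. \<theta> i * y i j) - b n"
        by (subst sum.swap) (rule refl)
      finally show "a n * (\<Sum>j=1..n. (\<lambda>j\<in>{1..n}. \<Sum>i=1..k. \<theta> i * y i j) j) - b n \<le>
          (\<Sum>i=1..k. \<theta> i * (a n * (\<Sum>j=1..n. (\<lambda>j\<in>{1..n}. y i j) j) - b n))"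
        by simp
    qed (use \<open>n \<ge> 1\<close> in auto)
  qed
qed

lemma in_Dminus_max_domain_of_attraction:
  fixes a b :: "nat \<Rightarrow> real"
  assumes M: "real_distribution M" and Z: "real_distribution Z" and D: "in_Dminus M"
    and a: "\<And>n. 0 < a n"
    and w: "weak_conv_m (\<lambda>n. distr (PiM {1..n} (\<lambda>_. M)) borel (\<lambda>x. a n * Max (x ` {1..n}) - b n)) Z"
  shows "in_Dminus Z"
proof (rule in_Dminus_weak_conv[OF _ Z _ w])
  show "real_distribution (distr (PiM {1..n} (\<lambda>_. M)) borel (\<lambda>x. a n * Max (x ` {1..n}) - b n))" for n
    by (rule real_distribution_distr_PiM[OF M]) measurable
  show "eventually (\<lambda>n. in_Dminus (distr (PiM {1..n} (\<lambda>_. M)) borel (\<lambda>x. a n * Max (x ` {1..n}) - b n)))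
      sequentially"
    unfolding eventually_sequentially
  proof (intro exI allI impI)
    fix n :: nat assume n: "n \<ge> 1"
    show "in_Dminus (distr (PiM {1..n} (\<lambda>_. M)) borel (\<lambda>x. a n * Max (x ` {1..n}) - b n))"
    proof (rule in_Dminus_distr_PiM[OF M D])
      fix x y :: "nat \<Rightarrow> real" assume xy: "\<And>j. j \<in> {1..n} \<Longrightarrow> x j \<le> y j"
      have "Max (x ` {1..n}) \<le> Max (y ` {1..n})"
        using n by (subst Max_le_iff) (auto intro: order.trans[OF xy Max_ge])
      then show "a n * Max (x ` {1..n}) - b n \<le> a n * Max (y ` {1..n}) - b n"
        using a[of n] by simp
    next
      fix k and \<theta> :: "nat \<Rightarrow> real" and y :: "nat \<Rightarrow> nat \<Rightarrow> real"
      assume \<theta>: "\<forall>i\<in>{1..k}. 0 \<le> \<theta> i" "(\<Sum>i=1..k. \<theta> i) = 1"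
      have "Max ((\<lambda>j. \<Sum>i=1..k. \<theta> i * y i j) ` {1..n}) \<le> (\<Sum>i=1..k. \<theta> i * Max ((\<lambda>j. y i j) ` {1..n}))"
        using n \<theta> by (subst Max_le_iff) (auto intro!: sum_mono mult_left_mono Max_ge)
      then have "a n * Max ((\<lambda>j. \<Sum>i=1..k. \<theta> i * y i j) ` {1..n}) - b n \<le>
          a n * (\<Sum>i=1..k. \<theta> i * Max ((\<lambda>j. y i j) ` {1..n})) - b n * (\<Sum>i=1..k. \<theta> i)"
        using a[of n] \<theta> by simp
      also have "\<dots> = (\<Sum>i=1..k. \<theta> i * (a n * Max ((\<lambda>j. y i j) ` {1..n}) - b n))"
        by (simp add: algebra_simps sum_subtractf sum_distrib_left sum_distrib_right)
      finally show "a n * Max ((\<lambda>j\<in>{1..n}. \<Sum>i=1..k. \<theta> i * y i j) ` {1..n}) - b n \<le>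
          (\<Sum>i=1..k. \<theta> i * (a n * Max ((\<lambda>j\<in>{1..n}. y i j) ` {1..n}) - b n))"
        by (simp add: image_restrict_eq)
    qed (use n in auto)
  qed
qed

theorem theorem3:
  fixes M Z :: "real measure"
  assumes "real_distribution M" and "real_distribution Z" and "in_Dminus M"
  shows "((\<exists>(a::nat \<Rightarrow> real) (b::nat \<Rightarrow> real). (\<forall>n. 0 < a n) \<and>
            weak_conv_m (\<lambda>n. distr (PiM {1..n} (\<lambda>_. M)) borel
                              (\<lambda>x. a n * (\<Sum>i=1..n. x i) - b n)) Z)
           \<longrightarrow> in_Dminus Z)
       \<and> ((\<exists>(a::nat \<Rightarrow> real) (b::nat \<Rightarrow> real). (\<forall>n. 0 < a n) \<and>
            weak_conv_m (\<lambda>n. distr (PiM {1..n} (\<lambda>_. M)) borel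
                              (\<lambda>x. a n * Max (x ` {1..n}) - b n)) Z)
           \<longrightarrow> in_Dminus Z)"
  using in_Dminus_sum_domain_of_attraction[OF assms] in_Dminus_max_domain_of_attraction[OF assms]
  by blast

end
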